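(* Let $P$ be a set of $n$ points chosen independently and uniformly at random from the hypercube $[-2,2]^d$, and let $C$ be the closed ball of radius $1$ centered at the origin. Then $\mathbb{E}[\operatorname{price}(P,C)]\geq \mathbb{E}[f_0(F_{\mathrm{in}})]=\Omega(n^{1-2/(d+1)})$, where the $\Omega$ hides constants depending on $d$.
   Context: For a closed convex $d$-dimensional polytope $F$, $f_k(F)$ denotes its number of $k$-dimensional faces. The inner fence $F_{\mathrm{in}}$ is a closed convex $d$-dimensional polytope with the minimum number of vertices such that $F_{\mathrm{in}}\subseteq C$ and $C\cap P=F_{\mathrm{in}}\cap P$. The outer fence $F_{\mathrm{out}}$ is a closed convex $d$-dimensional polytope with the minimum number of facets such that $C\subseteq F_{\mathrm{out}}$ and $C\cap P=F_{\mathrm{out}}\cap P$. The separation price is $\operatorname{price}(P,C)=f_0(F_{\mathrm{in}})+f_{d-1}(F_{\mathrm{out}})$. *)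

theory Defs
  imports "HOL-Probability.Probability"
begin

definition num_faces :: "nat \<Rightarrow> 'a::euclidean_space set \<Rightarrow> nat" where
  "num_faces k F = card {G. G face_of F \<and> aff_dim G = int k}"

definition full_polytope :: "'a::euclidean_space set \<Rightarrow> bool" where
  "full_polytope F \<longleftrightarrow> polytope F \<and> aff_dim F = int DIM('a)"

definition inner_admissible :: "'a::euclidean_space set \<Rightarrow> 'a set \<Rightarrow> 'a set \<Rightarrow> bool" where
  "inner_admissible P C F \<longleftrightarrow> full_polytope F \<and> F \<subseteq> C \<and> C \<inter> P = F \<inter> P"

definition outer_admissible :: "'a::euclidean_space set \<Rightarrow> 'a set \<Rightarrow> 'a set \<Rightarrow> bool" where
  "outer_admissible P C F \<longleftrightarrow> full_polytope F \<and> C \<subseteq> F \<and> C \<inter> P = F \<inter> P"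

definition is_inner_fence :: "'a::euclidean_space set \<Rightarrow> 'a set \<Rightarrow> 'a set \<Rightarrow> bool" where
  "is_inner_fence P C F \<longleftrightarrow> inner_admissible P C F \<and>
     (\<forall>G. inner_admissible P C G \<longrightarrow> num_faces 0 F \<le> num_faces 0 G)"

definition is_outer_fence :: "'a::euclidean_space set \<Rightarrow> 'a set \<Rightarrow> 'a set \<Rightarrow> bool" where
  "is_outer_fence P C F \<longleftrightarrow> outer_admissible P C F \<and>
     (\<forall>G. outer_admissible P C G \<longrightarrow>
        num_faces (DIM('a) - 1) F \<le> num_faces (DIM('a) - 1) G)"

definition inner_fence :: "'a::euclidean_space set \<Rightarrow> 'a set \<Rightarrow> 'a set" where
  "inner_fence P C = (SOME F. is_inner_fence P C F)"

definition outer_fence :: "'a::euclidean_space set \<Rightarrow> 'a set \<Rightarrow> 'a set" where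
  "outer_fence P C = (SOME F. is_outer_fence P C F)"

definition price :: "'a::euclidean_space set \<Rightarrow> 'a set \<Rightarrow> nat" where
  "price P C = num_faces 0 (inner_fence P C)
             + num_faces (DIM('a) - 1) (outer_fence P C)"

definition cube_sample :: "nat \<Rightarrow> (nat \<Rightarrow> 'a::euclidean_space) measure" where
  "cube_sample n = PiM {..<n} (\<lambda>_. uniform_measure lborel (cbox (- (2 *\<^sub>R One)) (2 *\<^sub>R One)))"

end

theory Submission
  imports Defs "HOL-Analysis.Analysis"
begin

(* An inner fence F of a sample P contains every sample point of the unit ball B, and F is the
   convex hull of its vertices, so F has a vertex in every cap of B that contains a sample point;
   hence pairwise disjoint caps hit by P give distinct vertices.
   Fix a pole b0 and a scale t.  Unit vectors u_g whose tangential coordinates form a grid of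
   mesh t are t-separated, so the caps {x \<in> B. 1 - t^2/16 \<le> u_g \<bullet> x} are pairwise
   disjoint; there are about t^(1-d) of them.  Each cap contains a rotated copy of one fixed
   packing of about t^(1-d) disjoint balls of radius t^2/64 near b0, so it has volume of order
   t^(d+1).  For t of order n^(-1/(d+1)) each cap is hit by one of the n samples with probability
   at least 1/2, so the expected number of vertices is of order t^(1-d) = n^((d-1)/(d+1)). *)

lemma num_faces_0_eq_card_extreme_points:
  "num_faces 0 F = card {v. v extreme_point_of F}"
proof -
  have "{G. G face_of F \<and> aff_dim G = int 0} = (\<lambda>v. {v}) ` {v. v extreme_point_of F}"
    by (auto simp: aff_dim_eq_0 face_of_singleton)
  then show ?thesis
    by (simp add: num_faces_def card_image)
qed

lemma inner_admissible_exists: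
  fixes P C :: "'a::euclidean_space set"
  assumes "finite P" "convex C" "aff_dim C = DIM('a)"
  shows "\<exists>F. inner_admissible P C F"
proof -
  obtain B where B: "B \<subseteq> C" "\<not> affine_dependent B" "affine hull C = affine hull B"
    using affine_basis_exists by blast
  define F where "F = convex hull ((P \<inter> C) \<union> B)"
  have "finite B"
    using B(2) aff_independent_finite by blast
  then have "polytope F"
    unfolding F_def polytope_def using \<open>finite P\<close> by (intro exI[of _ "(P \<inter> C) \<union> B"]) simp
  have "aff_dim B = DIM('a)"
    using B(3) assms(3) by (metis aff_dim_affine_hull)
  then have "aff_dim F = DIM('a)"
    using aff_dim_subset[of B "(P \<inter> C) \<union> B"] aff_dim_le_DIM[of F]
    by (simp add: F_def aff_dim_convex_hull)
  moreover have "F \<subseteq> C"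
    unfolding F_def using B(1) \<open>convex C\<close> by (intro hull_minimal) auto
  moreover have "P \<inter> C \<subseteq> F"
    unfolding F_def by (meson hull_subset le_sup_iff)
  ultimately show ?thesis
    unfolding inner_admissible_def full_polytope_def using \<open>polytope F\<close> by blast
qed

lemma inner_admissible_inner_fence:
  assumes "\<exists>F. inner_admissible P C F"
  shows "inner_admissible P C (inner_fence P C)"
proof -
  obtain F where "inner_admissible P C F"
    and "\<forall>G. inner_admissible P C G \<longrightarrow> num_faces 0 F \<le> num_faces 0 G"
    using assms ex_has_least_nat[of "inner_admissible P C" _ "num_faces 0"] by metis
  then have "is_inner_fence P C F"
    by (simp add: is_inner_fence_def)
  then have "is_inner_fence P C (inner_fence P C)"
    unfolding inner_fence_def by (rule someI)
  then show ?thesis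
    by (simp add: is_inner_fence_def)
qed

lemma card_caps_hit_le_num_vertices:
  fixes F C P :: "'a::euclidean_space set"
  assumes adm: "inner_admissible P C F"
    and caps_disjoint: "\<And>i j v. i \<in> I \<Longrightarrow> j \<in> I \<Longrightarrow> v \<in> C \<Longrightarrow>
                         c i \<le> u i \<bullet> v \<Longrightarrow> c j \<le> u j \<bullet> v \<Longrightarrow> i = j"
    and in_cap: "\<And>i. i \<in> I \<Longrightarrow> R i \<subseteq> C \<inter> {x. c i \<le> u i \<bullet> x}"
  shows "card {i\<in>I. P \<inter> R i \<noteq> {}} \<le> num_faces 0 F"
proof -
  define H where "H = {i\<in>I. P \<inter> R i \<noteq> {}}"
  define E where "E = {v. v extreme_point_of F}"
  have "polytope F" "F \<subseteq> C" "C \<inter> P = F \<inter> P"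
    using adm by (auto simp: inner_admissible_def full_polytope_def)
  then obtain V where "finite V" "F = convex hull V"
    unfolding polytope_def by blast
  then have "F = convex hull E"
    using Krein_Milman_polytope by (simp add: E_def)
  have "E \<subseteq> V"
    using \<open>F = convex hull V\<close> extreme_point_of_convex_hull by (auto simp: E_def)
  then have "finite E"
    using \<open>finite V\<close> finite_subset by blast
  have "E \<subseteq> C"
    using \<open>F \<subseteq> C\<close> by (auto simp: E_def extreme_point_of_def)
  have "\<exists>v\<in>E. c i \<le> u i \<bullet> v" if "i \<in> H" for i
  proof (rule ccontr)
    assume "\<not> (\<exists>v\<in>E. c i \<le> u i \<bullet> v)"
    then have "F \<subseteq> {x. u i \<bullet> x < c i}"
      unfolding \<open>F = convex hull E\<close> by (intro hull_minimal convex_halfspace_lt) (auto simp: not_le)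
    moreover obtain p where "p \<in> P" "p \<in> R i"
      using \<open>i \<in> H\<close> by (auto simp: H_def)
    ultimately show False
      using \<open>i \<in> H\<close> in_cap \<open>C \<inter> P = F \<inter> P\<close> by (fastforce simp: H_def)
  qed
  then obtain w where w: "\<And>i. i \<in> H \<Longrightarrow> w i \<in> E \<and> c i \<le> u i \<bullet> w i"
    using bchoice[of H "\<lambda>i v. v \<in> E \<and> c i \<le> u i \<bullet> v"] by blast
  have "inj_on w H"
  proof (rule inj_onI)
    fix i j
    assume "i \<in> H" "j \<in> H" "w i = w j"
    then show "i = j"
      using caps_disjoint[of i j "w i"] w[of i] w[of j] \<open>E \<subseteq> C\<close> by (auto simp: H_def)
  qed
  then have "card H \<le> card E"
    using w \<open>finite E\<close> by (intro card_inj_on_le) auto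
  then show ?thesis
    by (simp add: num_faces_0_eq_card_extreme_points E_def H_def)
qed

lemma one_minus_power_le_half:
  fixes q :: real
  assumes "q \<le> 1" "1 \<le> q * real n"
  shows "(1 - q) ^ n \<le> 1 / 2"
proof -
  have "(1 - q) ^ n \<le> exp (- q) ^ n"
    using assms exp_ge_add_one_self[of "- q"] by (intro power_mono) auto
  also have "\<dots> = exp (- (q * n))"
    by (simp add: exp_of_nat_mult[symmetric] mult.commute)
  also have "\<dots> \<le> exp (- 1)"
    using assms by simp
  also have "\<dots> \<le> 1 / 2"
    using exp_ge_add_one_self[of 1] by (simp add: exp_minus field_simps)
  finally show ?thesis .
qed

lemma (in prob_space) prob_PiM_PiE_compl:
  assumes "finite I" "A \<in> sets M"
  shows "measure (PiM I (\<lambda>_. M)) (PiE I (\<lambda>_. space M - A)) = (1 - prob A) ^ card I"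
proof -
  interpret P: product_prob_space "\<lambda>_. M" I
    by unfold_locales
  have "emeasure (PiM I (\<lambda>_. M)) (PiE I (\<lambda>_. space M - A)) = (\<Prod>i\<in>I. emeasure M (space M - A))"
    using assms by (intro P.emeasure_PiM) auto
  then have "ennreal (P.prob (PiE I (\<lambda>_. space M - A))) = ennreal ((1 - prob A) ^ card I)"
    using assms
    by (simp add: P.emeasure_eq_measure emeasure_eq_measure prob_compl prod_ennreal ennreal_power)
  then show ?thesis
    by (subst (asm) ennreal_inj) auto
qed

lemma (in prob_space) nn_integral_card_hits_ge:
  fixes n :: nat
  assumes "finite I"
    and A: "\<And>i. i \<in> I \<Longrightarrow> A i \<in> sets M" "\<And>i. i \<in> I \<Longrightarrow> 1 \<le> prob (A i) * real n"
  shows "ennreal (card I / 2)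
           \<le> (\<integral>\<^sup>+p. of_nat (card {i\<in>I. \<exists>j<n. p j \<in> A i}) \<partial>PiM {..<n} (\<lambda>_. M))"
proof -
  let ?M = "PiM {..<n} (\<lambda>_. M)"
  interpret P: product_prob_space "\<lambda>_. M" "{..<n}"
    by unfold_locales
  define miss where "miss i = PiE {..<n} (\<lambda>_. space M - A i)" for i
  have miss: "miss i \<in> sets ?M" if "i \<in> I" for i
    unfolding miss_def using A(1)[OF that] by (intro sets_PiM_I_finite) auto
  have "ennreal (card I / 2) = (\<Sum>i\<in>I. ennreal (1 / 2))"
    using ennreal_mult[of "real (card I)" "1 / 2"] by (simp add: ennreal_of_nat_eq_real_of_nat)
  also have "\<dots> \<le> (\<Sum>i\<in>I. emeasure ?M (space ?M - miss i))"
  proof (rule sum_mono)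
    fix i assume "i \<in> I"
    have "P.prob (miss i) = (1 - prob (A i)) ^ n"
      unfolding miss_def using prob_PiM_PiE_compl[of "{..<n}" "A i"] A(1)[OF \<open>i \<in> I\<close>] by simp
    moreover have "(1 - prob (A i)) ^ n \<le> 1 / 2"
      using one_minus_power_le_half A(2)[OF \<open>i \<in> I\<close>] by simp
    ultimately have "1 / 2 \<le> P.prob (space ?M - miss i)"
      using miss[OF \<open>i \<in> I\<close>] by (simp add: P.prob_compl)
    then show "ennreal (1 / 2) \<le> emeasure ?M (space ?M - miss i)"
      unfolding P.emeasure_eq_measure by (rule ennreal_leI)
  qed
  also have "\<dots> = (\<integral>\<^sup>+p. (\<Sum>i\<in>I. indicator (space ?M - miss i) p) \<partial>?M)"
    using miss by (simp add: nn_integral_sum)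
  also have "\<dots> = (\<integral>\<^sup>+p. of_nat (card {i\<in>I. \<exists>j<n. p j \<in> A i}) \<partial>?M)"
  proof (rule nn_integral_cong)
    fix p assume "p \<in> space ?M"
    then have "p \<in> space ?M - miss i \<longleftrightarrow> (\<exists>j<n. p j \<in> A i)" for i
      by (auto simp: miss_def space_PiM PiE_iff)
    then show "(\<Sum>i\<in>I. indicator (space ?M - miss i) p)
                 = of_nat (card {i\<in>I. \<exists>j<n. p j \<in> A i})"
      using \<open>finite I\<close> by (simp add: indicator_def sum.If_cases Int_def)
  qed
  finally show ?thesis .
qed

abbreviation cube :: "'a::euclidean_space set" where
  "cube \<equiv> cbox (- (2 *\<^sub>R One)) (2 *\<^sub>R One)"

lemma emeasure_lborel_cube: "emeasure lborel (cube :: 'a::euclidean_space set) = ennreal (4 ^ DIM('a))"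
proof -
  have "(\<Prod>b\<in>(Basis::'a set). (2 *\<^sub>R One + 2 *\<^sub>R One) \<bullet> b) = (\<Prod>b\<in>(Basis::'a set). 4)"
    by (intro prod.cong) (auto simp: inner_add_left)
  then show ?thesis
    by (simp add: emeasure_lborel_cbox_eq inner_diff_left prod_ennreal)
qed

lemma prob_space_uniform_cube: "prob_space (uniform_measure lborel (cube :: 'a::euclidean_space set))"
  by (rule prob_space_uniform_measure) (simp_all add: emeasure_lborel_cube)

lemma measure_uniform_cube:
  assumes "B \<in> sets borel" "B \<subseteq> (cube :: 'a::euclidean_space set)"
  shows "measure (uniform_measure lborel cube) B = measure lborel B / 4 ^ DIM('a)"
proof -
  have "measure lborel (cube :: 'a set) = 4 ^ DIM('a)"
    by (simp add: measure_def emeasure_lborel_cube)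
  then show ?thesis
    using assms by (simp add: emeasure_lborel_cube Int_absorb1)
qed

lemma cball_subset_cube: "cball 0 1 \<subseteq> (cube :: 'a::euclidean_space set)"
proof
  fix x :: 'a assume "x \<in> cball 0 1"
  then have "\<bar>x \<bullet> b\<bar> \<le> 1" if "b \<in> Basis" for b
    using Basis_le_norm[OF that, of x] by simp
  then show "x \<in> cube"
    by (force simp: mem_box inner_minus_left abs_le_iff)
qed

definition of_coords :: "('a::euclidean_space \<Rightarrow> real) \<Rightarrow> 'a" where
  "of_coords c = (\<Sum>b\<in>Basis. c b *\<^sub>R b)"

lemma inner_of_coords_Basis [simp]: "b \<in> Basis \<Longrightarrow> of_coords c \<bullet> b = c b"
  by (simp add: of_coords_def inner_sum_left inner_Basis if_distrib cong: if_cong)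

lemma norm_of_coords_power2: "norm (of_coords c) ^ 2 = (\<Sum>b\<in>Basis. c b ^ 2)"
proof -
  have "norm (of_coords c) ^ 2 = of_coords c \<bullet> of_coords c"
    by (simp add: power2_norm_eq_inner)
  also have "\<dots> = (\<Sum>b\<in>Basis. (of_coords c \<bullet> b) * (of_coords c \<bullet> b))"
    by (rule euclidean_inner)
  finally show ?thesis
    by (simp add: power2_eq_square)
qed

lemma orthogonal_transformation_exists_inner:
  fixes a b :: "'a::real_inner"
  assumes "norm a = norm b"
  obtains f where "orthogonal_transformation f" "f a = b"
proof (cases "a = b")
  case True
  then show ?thesis
    using that orthogonal_transformation_id by blast
next
  case False
  define w where "w = a - b"
  define f where "f x = x - (2 * (x \<bullet> w) / (w \<bullet> w)) *\<^sub>R w" for x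
  have "w \<bullet> w \<noteq> 0"
    using False by (simp add: w_def)
  have "linear f"
    by (rule linearI) (simp_all add: f_def inner_add_left add_divide_distrib scaleR_add_left
        algebra_simps)
  moreover have "f x \<bullet> f y = x \<bullet> y" for x y
    using \<open>w \<bullet> w \<noteq> 0\<close>
    by (simp add: f_def inner_diff_left inner_diff_right field_simps inner_commute)
  moreover have "f a = b"
  proof -
    have "a \<bullet> a = b \<bullet> b"
      using assms by (simp add: dot_square_norm)
    then have "w \<bullet> w = 2 * (a \<bullet> w)"
      by (simp add: w_def inner_diff_left inner_diff_right inner_commute)
    then show ?thesis
      using \<open>w \<bullet> w \<noteq> 0\<close> by (simp add: f_def w_def)
  qed
  ultimately show ?thesis
    using that by (auto simp: orthogonal_transformation_def)
qed

lemma cap_points_close: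
  fixes u u' v :: "'a::real_inner"
  assumes "norm u = 1" "norm u' = 1" "norm v \<le> 1" "1 - h \<le> u \<bullet> v" "1 - h \<le> u' \<bullet> v"
  shows "norm (u - u') ^ 2 \<le> 8 * h"
proof -
  have close: "norm (v - w) ^ 2 \<le> 2 * h" if "norm w = 1" "1 - h \<le> w \<bullet> v" for w
  proof -
    have "norm (v - w) ^ 2 = norm v ^ 2 - 2 * (w \<bullet> v) + norm w ^ 2"
      by (simp add: power2_norm_eq_inner inner_diff_left inner_diff_right inner_commute)
    moreover have "norm v ^ 2 \<le> 1"
      using assms(3) by (simp add: power_le_one)
    ultimately show ?thesis
      using that by simp
  qed
  have "norm (u - u') \<le> norm (v - u) + norm (v - u')"
    using norm_triangle_ineq4[of "v - u'" "v - u"] by (simp add: add.commute)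
  then have "norm (u - u') ^ 2 \<le> (norm (v - u) + norm (v - u')) ^ 2"
    by (simp add: power_mono)
  also have "\<dots> \<le> 2 * norm (v - u) ^ 2 + 2 * norm (v - u') ^ 2"
    using sum_squares_ge_zero[of "norm (v - u) - norm (v - u')" 0]
    by (simp add: power2_eq_square algebra_simps)
  also have "\<dots> \<le> 8 * h"
    using close[OF assms(1,4)] close[OF assms(2,5)] by simp
  finally show ?thesis .
qed

lemma ball_subset_cap:
  fixes u c :: "'a::real_inner"
  assumes "norm u = 1" "norm c \<le> 1 - r" "1 - h + r \<le> u \<bullet> c"
  shows "ball c r \<subseteq> cball 0 1 \<inter> {x. 1 - h \<le> u \<bullet> x}"
proof
  fix x assume "x \<in> ball c r"
  then have "norm (x - c) < r"
    by (simp add: dist_norm norm_minus_commute)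
  then have "norm x \<le> 1"
    using assms(2) norm_triangle_sub[of x c] by simp
  moreover have "- r \<le> u \<bullet> (x - c)"
    using Cauchy_Schwarz_ineq2[of u "x - c"] \<open>norm (x - c) < r\<close> assms(1) by simp
  then have "1 - h \<le> u \<bullet> x"
    using assms(3) by (simp add: inner_diff_right)
  ultimately show "x \<in> cball 0 1 \<inter> {x. 1 - h \<le> u \<bullet> x}"
    by simp
qed

(* (1/(t d))^(d-1) balls of volume unit_ball_vol d * (t^2/64)^d inside a cube of volume 4^d *)
definition packing_const :: "nat \<Rightarrow> real" where
  "packing_const d = unit_ball_vol d / (real d ^ (d - 1) * 256 ^ d)"

locale cap_packing =
  fixes t :: real and b0 :: "'a::euclidean_space"
  assumes t_pos: "0 < t" and t_le_1: "t \<le> 1" and b0: "b0 \<in> Basis"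
begin

(* small enough that t^2 * sqnorm g \<le> 1, so that pole g is a unit vector *)
definition "K = nat \<lfloor>1 / (t * DIM('a))\<rfloor>"

definition "grid = (Basis - {b0}) \<rightarrow>\<^sub>E {- int K..int K}"

definition "sqnorm g = (\<Sum>b\<in>Basis - {b0}. real_of_int (g b) ^ 2)"

definition "pole g =
  of_coords (\<lambda>b. if b = b0 then sqrt (1 - t\<^sup>2 * sqnorm g) else t * real_of_int (g b))"

definition "cap_height = t\<^sup>2 / 16"

definition "ball_radius = cap_height / 4"

definition "centre k =
  of_coords (\<lambda>b. if b = b0 then 1 - cap_height / 2 else 2 * ball_radius * real_of_int (k b))"

definition "rotation g = (SOME f. orthogonal_transformation f \<and> f b0 = pole g)"

definition "region g = (\<Union>k\<in>grid. ball (rotation g (centre k)) ball_radius)"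

lemma cap_height_pos: "0 < cap_height"
  using t_pos by (simp add: cap_height_def)

lemma ball_radius_pos: "0 < ball_radius"
  using cap_height_pos by (simp add: ball_radius_def)

lemma finite_grid: "finite grid"
  by (simp add: grid_def finite_PiE)

lemma sum_Basis_split: "(\<Sum>b\<in>Basis. f b) = f b0 + (\<Sum>b\<in>Basis - {b0}. f b)"
  using b0 by (simp add: sum.remove)

lemma sqnorm_le:
  assumes "g \<in> grid"
  shows "t\<^sup>2 * sqnorm g \<le> 1"
proof -
  have "real K \<le> 1 / (t * DIM('a))"
    using t_pos by (simp add: K_def)
  have "real_of_int (g b) ^ 2 \<le> (1 / (t * DIM('a))) ^ 2" if "b \<in> Basis - {b0}" for b
  proof -
    have "\<bar>g b\<bar> \<le> int K"
      using assms that by (force simp: grid_def PiE_iff abs_le_iff)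
    then have "\<bar>real_of_int (g b)\<bar> \<le> 1 / (t * DIM('a))"
      using \<open>real K \<le> 1 / (t * DIM('a))\<close> by linarith
    then show ?thesis
      by (metis abs_ge_zero power2_abs power_mono)
  qed
  then have "sqnorm g \<le> real (card (Basis - {b0})) * (1 / (t * DIM('a))) ^ 2"
    unfolding sqnorm_def by (rule sum_bounded_above)
  also have "\<dots> \<le> real DIM('a) * (1 / (t * DIM('a))) ^ 2"
    by (intro mult_right_mono) (simp_all add: card_Diff1_le)
  finally have "sqnorm g \<le> real DIM('a) * (1 / (t * DIM('a))) ^ 2" .
  then have "t\<^sup>2 * sqnorm g \<le> 1 / DIM('a)"
    using t_pos by (simp add: field_simps power2_eq_square)
  also have "\<dots> \<le> 1"
    by simp
  finally show ?thesis .
qed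

lemma norm_pole:
  assumes "g \<in> grid"
  shows "norm (pole g) = 1"
proof -
  have "norm (pole g) ^ 2 = (1 - t\<^sup>2 * sqnorm g) + t\<^sup>2 * sqnorm g"
    using sqnorm_le[OF assms]
    by (simp add: pole_def norm_of_coords_power2 sum_Basis_split sqnorm_def power_mult_distrib
        sum_distrib_left)
  then show ?thesis
    using power2_eq_iff_nonneg[of "norm (pole g)" 1] by simp
qed

lemma grid_neq:
  assumes "g \<in> grid" "g' \<in> grid" "g \<noteq> g'"
  obtains b where "b \<in> Basis" "b \<noteq> b0" "g b \<noteq> g' b"
  using assms by (auto simp: grid_def PiE_iff extensional_def) (metis ext)

lemma grid_separated:
  assumes "g \<in> grid" "g' \<in> grid" "g \<noteq> g'" "0 \<le> s"
    and "\<And>b. b \<in> Basis - {b0} \<Longrightarrow> x \<bullet> b = s * g b \<and> y \<bullet> b = s * g' b"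
  shows "s \<le> norm (x - y)"
proof -
  obtain b where b: "b \<in> Basis" "b \<noteq> b0" "g b \<noteq> g' b"
    using grid_neq assms(1-3) by blast
  have "1 \<le> \<bar>real_of_int (g b) - real_of_int (g' b)\<bar>"
    using b(3) by linarith
  then have "s \<le> s * \<bar>real_of_int (g b) - real_of_int (g' b)\<bar>"
    using \<open>0 \<le> s\<close> by (metis mult.right_neutral mult_left_mono)
  also have "\<dots> = \<bar>(x - y) \<bullet> b\<bar>"
    using assms(4) assms(5)[of b] b by (simp add: inner_diff_left abs_mult flip: right_diff_distrib)
  also have "\<dots> \<le> norm (x - y)"
    using b(1) by (rule Basis_le_norm)
  finally show ?thesis .
qed

lemma poles_separated:
  assumes "g \<in> grid" "g' \<in> grid" "g \<noteq> g'"
  shows "t \<le> norm (pole g - pole g')"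
  using assms t_pos by (intro grid_separated) (auto simp: pole_def)

lemma centres_separated:
  assumes "k \<in> grid" "k' \<in> grid" "k \<noteq> k'"
  shows "2 * ball_radius \<le> norm (centre k - centre k')"
  using assms by (intro grid_separated) (auto simp: centre_def ball_radius_def cap_height_def)

lemma norm_centre:
  assumes "k \<in> grid"
  shows "norm (centre k) \<le> 1 - ball_radius"
proof -
  have "norm (centre k) ^ 2 = (1 - cap_height / 2) ^ 2 + (cap_height / 64) * (t\<^sup>2 * sqnorm k)"
    by (simp add: centre_def norm_of_coords_power2 sum_Basis_split sqnorm_def sum_distrib_left
        ball_radius_def cap_height_def power_mult_distrib field_simps)
  also have "\<dots> \<le> (1 - cap_height / 2) ^ 2 + cap_height / 64"
    using sqnorm_le[OF assms] t_pos
    by (intro add_left_mono mult_left_le) (simp_all add: cap_height_def)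
  also have "\<dots> \<le> (1 - ball_radius) ^ 2"
    using t_pos t_le_1 power_le_one[of t 2]
    by (simp add: ball_radius_def cap_height_def power2_eq_square field_simps)
  finally show ?thesis
    by (rule power2_le_imp_le)
      (use t_pos t_le_1 power_le_one[of t 2] in \<open>simp add: ball_radius_def cap_height_def\<close>)
qed

lemma rotation:
  assumes "g \<in> grid"
  shows "orthogonal_transformation (rotation g)" "rotation g b0 = pole g"
proof -
  have "\<exists>f. orthogonal_transformation f \<and> f b0 = pole g"
    using orthogonal_transformation_exists_inner[of b0 "pole g"] norm_pole[OF assms] b0 by auto
  then have "orthogonal_transformation (rotation g) \<and> rotation g b0 = pole g"
    unfolding rotation_def by (rule someI_ex)
  then show "orthogonal_transformation (rotation g)" "rotation g b0 = pole g"
    by auto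
qed

lemma region_subset_cap:
  assumes "g \<in> grid"
  shows "region g \<subseteq> cball 0 1 \<inter> {x. 1 - cap_height \<le> pole g \<bullet> x}"
proof -
  have "ball (rotation g (centre k)) ball_radius \<subseteq> cball 0 1 \<inter> {x. 1 - cap_height \<le> pole g \<bullet> x}"
    if "k \<in> grid" for k
  proof (rule ball_subset_cap)
    show "norm (pole g) = 1"
      using norm_pole[OF assms] .
    show "norm (rotation g (centre k)) \<le> 1 - ball_radius"
      using norm_centre[OF that] rotation(1)[OF assms] by (simp add: orthogonal_transformation)
    have "pole g \<bullet> rotation g (centre k) = b0 \<bullet> centre k"
      using rotation[OF assms] by (metis orthogonal_transformation_def)
    also have "\<dots> = 1 - cap_height / 2"
      using b0 by (subst inner_commute) (simp add: centre_def)
    finally show "1 - cap_height + ball_radius \<le> pole g \<bullet> rotation g (centre k)"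
      using cap_height_pos by (simp add: ball_radius_def)
  qed
  then show ?thesis
    by (auto simp: region_def)
qed

lemma caps_disjoint:
  assumes "g \<in> grid" "g' \<in> grid" "v \<in> cball 0 1"
    and "1 - cap_height \<le> pole g \<bullet> v" "1 - cap_height \<le> pole g' \<bullet> v"
  shows "g = g'"
proof (rule ccontr)
  assume "g \<noteq> g'"
  have "norm (pole g - pole g') ^ 2 \<le> 8 * cap_height"
    using assms norm_pole by (intro cap_points_close) auto
  also have "\<dots> < t ^ 2"
    using t_pos by (simp add: cap_height_def)
  finally have "norm (pole g - pole g') < t"
    using t_pos by (simp add: power_less_imp_less_base)
  with poles_separated[OF assms(1,2) \<open>g \<noteq> g'\<close>] show False
    by simp
qed

lemma card_grid_ge: "(1 / (t * DIM('a))) ^ (DIM('a) - 1) \<le> real (card grid)"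
proof -
  have "card {- int K..int K} = 2 * K + 1"
    by simp
  then have "card grid = (2 * K + 1) ^ (DIM('a) - 1)"
    using b0 by (simp add: grid_def card_PiE)
  moreover have "1 / (t * DIM('a)) \<le> real (2 * K + 1)"
    using t_pos unfolding K_def by linarith
  ultimately show ?thesis
    using t_pos by (simp add: power_mono)
qed

lemma emeasure_region:
  assumes "g \<in> grid"
  shows "emeasure lborel (region g) = card grid * ennreal (unit_ball_vol DIM('a) * ball_radius ^ DIM('a))"
proof -
  have "disjoint_family_on (\<lambda>k. ball (rotation g (centre k)) ball_radius) grid"
    unfolding disjoint_family_on_def
  proof (intro ballI impI)
    fix k k' assume "k \<in> grid" "k' \<in> grid" "k \<noteq> k'"
    have "dist (rotation g (centre k)) (rotation g (centre k')) = norm (centre k - centre k')"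
      using rotation(1)[OF assms]
      by (simp add: dist_norm orthogonal_transformation linear_diff[symmetric])
    then have "2 * ball_radius \<le> dist (rotation g (centre k)) (rotation g (centre k'))"
      using centres_separated[OF \<open>k \<in> grid\<close> \<open>k' \<in> grid\<close> \<open>k \<noteq> k'\<close>] by simp
    then show "ball (rotation g (centre k)) ball_radius \<inter> ball (rotation g (centre k')) ball_radius = {}"
      using dist_triangle_less_add[of "rotation g (centre k)" _ ball_radius "rotation g (centre k')" ball_radius]
      by (auto simp: dist_commute)
  qed
  then have "emeasure lborel (region g)
               = (\<Sum>k\<in>grid. emeasure lborel (ball (rotation g (centre k)) ball_radius))"
    unfolding region_def using finite_grid by (intro sum_emeasure[symmetric]) auto
  then show ?thesis
    using ball_radius_pos by (simp add: emeasure_ball)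
qed

lemma region_borel: "region g \<in> sets borel"
  unfolding region_def by (intro borel_open open_UN ballI open_ball)

lemma prob_region_ge:
  assumes "g \<in> grid"
  shows "packing_const DIM('a) * t ^ (DIM('a) + 1) \<le> measure (uniform_measure lborel cube) (region g)"
proof -
  define d where "d = DIM('a)"
  define \<omega> where "\<omega> = unit_ball_vol d"
  have "\<omega> > 0" "d \<ge> 1"
    by (simp_all add: \<omega>_def d_def)
  have "measure lborel (region g) = card grid * (\<omega> * ball_radius ^ d)"
    using emeasure_region[OF assms] cap_height_pos
    by (simp add: measure_def \<omega>_def d_def enn2real_mult ball_radius_def)
  then have prob: "measure (uniform_measure lborel cube) (region g)
                     = card grid * (\<omega> * ball_radius ^ d) / 4 ^ d"
    using region_borel region_subset_cap[OF assms] cball_subset_cube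
    by (subst measure_uniform_cube) (auto simp: d_def)
  have "2 * d = (d + 1) + (d - 1)"
    using \<open>d \<ge> 1\<close> by simp
  then have "t ^ (2 * d) = t ^ (d + 1) * t ^ (d - 1)"
    by (metis power_add)
  moreover have "ball_radius ^ d = t ^ (2 * d) / 64 ^ d"
    by (simp add: ball_radius_def cap_height_def power_divide power_mult)
  moreover have "(256::real) ^ d = 64 ^ d * 4 ^ d"
    by (simp flip: power_mult_distrib)
  moreover have "(1 / (t * d)) ^ (d - 1) = 1 / (t ^ (d - 1) * real d ^ (d - 1))"
    by (simp add: power_divide power_mult_distrib)
  ultimately have "packing_const d * t ^ (d + 1) = (1 / (t * d)) ^ (d - 1) * (\<omega> * ball_radius ^ d) / 4 ^ d"
    using t_pos \<open>d \<ge> 1\<close> by (simp add: packing_const_def \<omega>_def field_simps)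
  also have "\<dots> \<le> card grid * (\<omega> * ball_radius ^ d) / 4 ^ d"
    using card_grid_ge \<open>\<omega> > 0\<close> cap_height_pos
    by (intro divide_right_mono mult_right_mono) (simp_all add: d_def ball_radius_def)
  finally show ?thesis
    using prob by (simp add: d_def)
qed

lemma expected_inner_fence_vertices_ge:
  fixes n :: nat
  assumes "1 \<le> packing_const DIM('a) * t ^ (DIM('a) + 1) * real n"
  shows "ennreal (card grid / 2)
           \<le> (\<integral>\<^sup>+p. of_nat (num_faces 0 (inner_fence (p ` {..<n}) (cball (0::'a) 1))) \<partial>cube_sample n)"
proof -
  interpret U: prob_space "uniform_measure lborel (cube :: 'a set)"
    by (rule prob_space_uniform_cube)
  have "ennreal (card grid / 2) \<le> (\<integral>\<^sup>+p. of_nat (card {g\<in>grid. \<exists>j<n. p j \<in> region g}) \<partial>cube_sample n)"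
    unfolding cube_sample_def
  proof (rule U.nn_integral_card_hits_ge)
    show "finite grid"
      by (rule finite_grid)
    show "region g \<in> sets (uniform_measure lborel cube)" for g
      using region_borel by simp
    show "1 \<le> U.prob (region g) * real n" if "g \<in> grid" for g
      using assms prob_region_ge[OF that] by (meson mult_right_mono of_nat_0_le_iff order_trans)
  qed
  also have "\<dots> \<le> (\<integral>\<^sup>+p. of_nat (num_faces 0 (inner_fence (p ` {..<n}) (cball (0::'a) 1))) \<partial>cube_sample n)"
  proof (rule nn_integral_mono)
    fix p :: "nat \<Rightarrow> 'a"
    have "inner_admissible (p ` {..<n}) (cball 0 1) (inner_fence (p ` {..<n}) (cball 0 1))"
      by (intro inner_admissible_inner_fence inner_admissible_exists) (simp_all add: aff_dim_cball)
    then have "card {g\<in>grid. p ` {..<n} \<inter> region g \<noteq> {}}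
                 \<le> num_faces 0 (inner_fence (p ` {..<n}) (cball 0 1))"
      using caps_disjoint region_subset_cap by (rule card_caps_hit_le_num_vertices)
    moreover have "{g\<in>grid. \<exists>j<n. p j \<in> region g} = {g\<in>grid. p ` {..<n} \<inter> region g \<noteq> {}}"
      by blast
    ultimately show "of_nat (card {g\<in>grid. \<exists>j<n. p j \<in> region g})
        \<le> (of_nat (num_faces 0 (inner_fence (p ` {..<n}) (cball 0 1))) :: ennreal)"
      by simp
  qed
  finally show ?thesis .
qed

end

lemma powers_of_root_powr:
  fixes x :: real and d :: nat
  assumes "1 \<le> x" "1 \<le> d"
  shows "1 \<le> x powr (1 / (real d + 1))" "(x powr (1 / (real d + 1))) ^ (d + 1) = x"
    "(x powr (1 / (real d + 1))) ^ (d - 1) = x powr (1 - 2 / (real d + 1))"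
proof -
  show "1 \<le> x powr (1 / (real d + 1))"
    using assms by (intro ge_one_powr_ge_zero) auto
  have "(x powr (1 / (real d + 1))) ^ k = x powr (k / (real d + 1))" for k
    using assms by (simp add: powr_powr flip: powr_realpow)
  from this[of "d + 1"] this[of "d - 1"] show
    "(x powr (1 / (real d + 1))) ^ (d + 1) = x"
    "(x powr (1 / (real d + 1))) ^ (d - 1) = x powr (1 - 2 / (real d + 1))"
    using assms by (simp_all add: of_nat_diff field_simps)
qed

lemma expected_inner_fence_vertices_asymptotic:
  "\<exists>c>0. \<exists>N. \<forall>n\<ge>N.
     ennreal (c * real n powr (1 - 2 / (real DIM('a) + 1)))
       \<le> (\<integral>\<^sup>+p. of_nat (num_faces 0 (inner_fence (p ` {..<n}) (cball (0::'a::euclidean_space) 1))) \<partial>cube_sample n)"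
proof -
  obtain b0 :: 'a where b0: "b0 \<in> Basis"
    using nonempty_Basis by blast
  define d where "d = DIM('a)"
  define \<alpha> where "\<alpha> = packing_const d"
  define e where "e = 1 - 2 / (real d + 1)"
  define c where "c = \<alpha> powr e / (2 * real d ^ (d - 1))"
  have "d \<ge> 1" "\<alpha> > 0"
    by (simp_all add: d_def \<alpha>_def packing_const_def)
  then have "c > 0"
    by (simp add: c_def)
  have "ennreal (c * real n powr e)
          \<le> (\<integral>\<^sup>+p. of_nat (num_faces 0 (inner_fence (p ` {..<n}) (cball (0::'a) 1))) \<partial>cube_sample n)"
    if "n \<ge> nat \<lceil>1 / \<alpha>\<rceil>" for n
  proof -
    have "1 \<le> \<alpha> * n"
      using that \<open>\<alpha> > 0\<close> by (simp add: field_simps)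
    then have "0 < n"
      by (cases n) auto
    define s where "s = (\<alpha> * n) powr (1 / (real d + 1))"
    have s: "1 \<le> s" "s ^ (d + 1) = \<alpha> * n" "s ^ (d - 1) = (\<alpha> * n) powr e"
      using powers_of_root_powr[OF \<open>1 \<le> \<alpha> * n\<close> \<open>d \<ge> 1\<close>] unfolding s_def e_def by simp_all
    interpret cap_packing "1 / s" b0
      using s(1) b0 by unfold_locales auto
    have "c * real n powr e = (1 / (1 / s * d)) ^ (d - 1) / 2"
      using s(3) \<open>\<alpha> > 0\<close> by (simp add: c_def powr_mult power_divide power_mult_distrib)
    also have "\<dots> \<le> card grid / 2"
      using card_grid_ge by (simp add: d_def)
    finally have "ennreal (c * real n powr e) \<le> ennreal (card grid / 2)"
      by (rule ennreal_leI)
    also have "\<dots> \<le> (\<integral>\<^sup>+p. of_nat (num_faces 0 (inner_fence (p ` {..<n}) (cball (0::'a) 1))) \<partial>cube_sample n)"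
      using s(1,2) \<open>\<alpha> > 0\<close> \<open>0 < n\<close>
      by (intro expected_inner_fence_vertices_ge) (simp add: \<alpha>_def d_def power_one_over)
    finally show ?thesis .
  qed
  then show ?thesis
    using \<open>c > 0\<close> unfolding e_def d_def by blast
qed

theorem lemmaB4:
  shows "(\<forall>n. (\<integral>\<^sup>+ p. of_nat (num_faces 0 (inner_fence (p ` {..<n}) (cball (0::'a::euclidean_space) 1))) \<partial>cube_sample n)
              \<le> (\<integral>\<^sup>+ p. of_nat (price (p ` {..<n}) (cball (0::'a) 1)) \<partial>cube_sample n))
       \<and> (\<exists>c>0. \<exists>N. \<forall>n\<ge>N.
            ennreal (c * real n powr (1 - 2 / (real DIM('a) + 1)))
              \<le> (\<integral>\<^sup>+ p. of_nat (num_faces 0 (inner_fence (p ` {..<n}) (cball (0::'a) 1))) \<partial>cube_sample n))"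
  using expected_inner_fence_vertices_asymptotic
  by (auto intro!: nn_integral_mono simp: price_def)

end
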